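(* Let $m\ge2$, $\alpha,\beta\in\mathbb C$, and let $A_{\alpha,\beta}$ be the $m\times m$ tridiagonal matrix with ones on the sub- and superdiagonal, $(1,1)$ entry $\alpha$, $(m,m)$ entry $\beta$, and zeros elsewhere. For $1\le i\le m-1$ let $$P_i^{(\alpha,\beta)}=T_m(z^i+z^{-i})+H_i^{(\alpha)}+J_mH_i^{(\beta)}J_m,$$ and $P_0^{(\alpha,\beta)}=I_m$. Then for every $n=1,\ldots,m-1$, $$A_{\alpha,\beta}^n=\sum_{i=0}^{\lfloor (n-1)/2\rfloor}\binom{n}{i}P_{n-2i}^{(\alpha,\beta)}+\varphi_nI_m,$$ where $\varphi_n=0$ if $n$ is odd and $\varphi_n=\binom{n}{n/2}$ if $n$ is even.
   Context: $I_m$ is the $m\times m$ identity and $J_m$ the $m\times m$ permutation matrix with ones on the anti-diagonal. $T_m(z^i+z^{-i})$ is the $m\times m$ symmetric Toeplitz matrix with ones on the $i$-th super- and subdiagonal and zeros elsewhere. For $\gamma\in\mathbb C$, let $\theta_\gamma=\gamma^2-1$, $h_1^{\gamma}(z)=\gamma z$ and $h_n^{\gamma}(z)=\theta_\gamma\sum_{j=1}^{n-1}\gamma^{n-j-1}z^j+\gamma z^n$ for $n\ge2$; $H_i^{(\gamma)}$ is the $m\times m$ Hankel matrix whose $(k,l)$ entry is the coefficient of $z^{k+l-1}$ in $h_i^{\gamma}(z)$ (i.e. the leading $m\times m$ principal submatrix of the semi-infinite Hankel matrix with first column the coefficient vector of $h_i^\gamma$). *)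

theory Defs
  imports Complex_Main "Jordan_Normal_Form.Matrix"
begin

(* All matrices are m x m Jordan_Normal_Form matrices, indexed 0..m-1
   (paper's index k corresponds to k-1 here). *)

definition theta :: "complex \<Rightarrow> complex" where
  "theta \<gamma> = \<gamma>^2 - 1"

(* coefficient of z^k in h_n^\<gamma>(z) (n \<ge> 1);
   h_1 = \<gamma> z, h_n = \<theta> \<Sum>_{j=1}^{n-1} \<gamma>^(n-j-1) z^j + \<gamma> z^n *)
definition hcoeff :: "complex \<Rightarrow> nat \<Rightarrow> nat \<Rightarrow> complex" where
  "hcoeff \<gamma> n k =
     (if n = 1 then (if k = 1 then \<gamma> else 0)
      else if k = n then \<gamma>
      else if 1 \<le> k \<and> k < n then theta \<gamma> * \<gamma>^(n - k - 1)
      else 0)"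

(* H_i^(\<gamma>): (k,l) entry (1-based) = coefficient of z^(k+l-1);
   with 0-based indices this is z^(k+l+1) *)
definition hankelH :: "nat \<Rightarrow> complex \<Rightarrow> nat \<Rightarrow> complex mat" where
  "hankelH m \<gamma> i = mat m m (\<lambda>(k,l). hcoeff \<gamma> i (k + l + 1))"

definition toepT :: "nat \<Rightarrow> nat \<Rightarrow> complex mat" where
  "toepT m i = mat m m (\<lambda>(k,l). if k = l + i \<or> l = k + i then 1 else 0)"

definition exchJ :: "nat \<Rightarrow> complex mat" where
  "exchJ m = mat m m (\<lambda>(k,l). if k + l = m - 1 then 1 else 0)"

definition matA :: "nat \<Rightarrow> complex \<Rightarrow> complex \<Rightarrow> complex mat" where
  "matA m \<alpha> \<beta> = mat m m (\<lambda>(k,l).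
      if k = 0 \<and> l = 0 then \<alpha>
      else if k = m - 1 \<and> l = m - 1 then \<beta>
      else if k = l + 1 \<or> l = k + 1 then 1 else 0)"

definition matP :: "nat \<Rightarrow> complex \<Rightarrow> complex \<Rightarrow> nat \<Rightarrow> complex mat" where
  "matP m \<alpha> \<beta> i =
     (if i = 0 then 1\<^sub>m m
      else toepT m i + hankelH m \<alpha> i + exchJ m * hankelH m \<beta> i * exchJ m)"

definition msum :: "nat \<Rightarrow> (nat \<Rightarrow> complex mat) \<Rightarrow> nat list \<Rightarrow> complex mat" where
  "msum m f xs = foldr (\<lambda>i acc. f i + acc) xs (0\<^sub>m m m)"

definition phi :: "nat \<Rightarrow> complex" where
  "phi n = (if odd n then 0 else of_nat (n choose (n div 2)))"

end

theory Submission
  imports Defs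
begin

text \<open>
  Describe all \<open>P_i\<close> by one entry formula, which at \<open>i = 0\<close> gives \<open>2 I\<close>. Right multiplication
  by \<open>A\<close> then satisfies the Chebyshev recurrence \<open>P_i A = P_(i+1) + P_(i-1)\<close> (and
  \<open>P_0 A = 2 P_1\<close>) as long as \<open>i + 2 \<le> m\<close>, so that the two Hankel corrections never meet:
  in the interior columns it is the three-term identity of the Toeplitz and Hankel coefficients,
  in the first column the corner entry \<open>\<alpha>\<close> is absorbed by the geometric shape of \<open>h_i^\<alpha>\<close>,
  and the last column is the first one after the reflection \<open>k \<mapsto> m - 1 - k\<close>, which swaps
  \<open>\<alpha>\<close> and \<open>\<beta>\<close>. Hence \<open>Q_j = P_|j| / 2\<close> for \<open>j \<in> \<int>\<close> satisfies \<open>Q_j A = Q_(j+1) + Q_(j-1)\<close>,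
  and \<open>A^n = \<Sum>_i (n choose i) Q_(n-2i)\<close> expands exactly like \<open>(z + 1/z)^n\<close>. Pairing the terms
  \<open>i\<close> and \<open>n - i\<close> gives the theorem, the middle term contributing \<open>\<phi>_n I\<close>.
\<close>

lemma sum_lessThan_mult_delta:
  fixes f :: "nat \<Rightarrow> 'a :: semiring_0"
  shows "(\<Sum>j<m. f j * (if j = c then e else 0)) = (if c < m then f c * e else 0)"
  by (induction m) (auto simp: less_Suc_eq)

lemma sum_binomial_shift:
  fixes f :: "int \<Rightarrow> 'a :: comm_ring_1"
  shows "(\<Sum>i\<le>Suc n. of_nat (Suc n choose i) * f (int (Suc n) - 2 * int i))
       = (\<Sum>i\<le>n. of_nat (n choose i) * (f (int n - 2 * int i + 1) + f (int n - 2 * int i - 1)))"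
proof -
  have A: "(\<Sum>i\<le>Suc n. of_nat (Suc n choose i) * f (int (Suc n) - 2 * int i))
     = f (int n + 1) + (\<Sum>i\<le>n. of_nat (n choose i) * f (int n - 2 * int i - 1))
        + (\<Sum>i\<le>n. of_nat (n choose Suc i) * f (int n - 2 * int i - 1))"
    by (subst sum.atMost_Suc_shift) (simp add: sum.distrib algebra_simps)
  have "(\<Sum>i\<le>n. of_nat (n choose i) * f (int n - 2 * int i + 1))
     = (\<Sum>i\<le>Suc n. of_nat (n choose i) * f (int n - 2 * int i + 1))"
    by (simp add: binomial_eq_0)
  also have "\<dots> = f (int n + 1) + (\<Sum>i\<le>n. of_nat (n choose Suc i) * f (int n - 2 * int i - 1))"
    by (subst sum.atMost_Suc_shift) (simp add: algebra_simps)
  finally show ?thesis unfolding A by (simp add: sum.distrib algebra_simps)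
qed

lemma sum_atMost_symmetric:
  fixes g :: "nat \<Rightarrow> 'a :: comm_semiring_1"
  assumes sym: "\<And>i. i \<le> n \<Longrightarrow> g (n - i) = g i"
  shows "(\<Sum>i\<le>n. g i) = 2 * (\<Sum>i<(n + 1) div 2. g i) + (if even n then g (n div 2) else 0)"
proof -
  let ?L = "{..<(n + 1) div 2}" and ?U = "{i. n < 2 * i \<and> i \<le> n}" and ?M = "{i. 2 * i = n}"
  have split: "{..n} = ?L \<union> ?U \<union> ?M" by auto
  have "finite ?U" "finite ?M" by (auto intro: finite_subset[of _ "{..n}"])
  then have "(\<Sum>i\<le>n. g i) = sum g ?L + sum g ?U + sum g ?M"
    unfolding split by (subst sum.union_disjoint, auto)+
  moreover have "sum g ?U = sum g ?L"
    by (rule sum.reindex_bij_witness[of _ "\<lambda>i. n - i" "\<lambda>i. n - i"]) (auto simp: sym)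
  moreover have "?M = (if even n then {n div 2} else {})" by auto
  ultimately show ?thesis by (simp add: mult_2)
qed

lemma hcoeff_eq_0_if_less: "i < s \<Longrightarrow> hcoeff \<gamma> i s = 0"
  by (simp add: hcoeff_def)

lemma hcoeff_three_term:
  assumes "1 \<le> i" "2 \<le> s"
  shows "hcoeff \<gamma> i (s - 1) + hcoeff \<gamma> i (s + 1) = hcoeff \<gamma> (i + 1) s + hcoeff \<gamma> (i - 1) s"
proof -
  consider "s + 2 \<le> i" | "s + 1 = i" | "s = i" | "s > i" using assms by linarith
  then show ?thesis
  proof cases
    case 1
    then obtain d where "i = s + 2 + d" by (metis le_iff_add)
    moreover obtain t where "s = t + 2" using assms by (metis add.commute le_iff_add)
    ultimately show ?thesis by (simp add: hcoeff_def)
  qed (use assms in \<open>auto simp: hcoeff_def Suc_diff_Suc\<close>)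
qed

definition sym_toeplitz_entry :: "nat \<Rightarrow> nat \<Rightarrow> nat \<Rightarrow> complex" where
  "sym_toeplitz_entry i k l = of_bool (k = l + i) + of_bool (l = k + i)"

lemma sym_toeplitz_entry_three_term:
  "1 \<le> i \<Longrightarrow> 1 \<le> l \<Longrightarrow> sym_toeplitz_entry i k (l - 1) + sym_toeplitz_entry i k (l + 1)
     = sym_toeplitz_entry (i + 1) k l + sym_toeplitz_entry (i - 1) k l"
  by (auto simp: sym_toeplitz_entry_def)

text \<open>At \<open>i = 0\<close> this is \<open>2 I\<close>, the value of \<open>T(z^i + z^-i)\<close>, rather than \<open>P_0 = I\<close>.\<close>

definition P_entry :: "nat \<Rightarrow> complex \<Rightarrow> complex \<Rightarrow> nat \<Rightarrow> nat \<Rightarrow> nat \<Rightarrow> complex" where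
  "P_entry m \<alpha> \<beta> i k l =
     sym_toeplitz_entry i k l + hcoeff \<alpha> i (k + l + 1) + hcoeff \<beta> i ((m - 1 - k) + (m - 1 - l) + 1)"

lemma P_entry_0: "P_entry m \<alpha> \<beta> 0 k l = 2 * of_bool (k = l)"
  by (simp add: P_entry_def sym_toeplitz_entry_def hcoeff_def)

lemma P_entry_reflect:
  assumes "k < m" "l < m"
  shows "P_entry m \<alpha> \<beta> i k l = P_entry m \<beta> \<alpha> i (m - 1 - k) (m - 1 - l)"
  using assms by (auto simp: P_entry_def sym_toeplitz_entry_def)

lemma P_entry_first_col:
  assumes i: "1 \<le> i" "i + 2 \<le> m" and k: "k < m"
  shows "\<alpha> * P_entry m \<alpha> \<beta> i k 0 + P_entry m \<alpha> \<beta> i k 1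
       = P_entry m \<alpha> \<beta> (i + 1) k 0 + P_entry m \<alpha> \<beta> (i - 1) k 0"
proof -
  have "hcoeff \<beta> j ((m - 1 - k) + (m - 1 - l) + 1) = 0" if "j + l \<le> i + 1" for j l
    using that i k by (intro hcoeff_eq_0_if_less) linarith
  then have P: "P_entry m \<alpha> \<beta> j k l = sym_toeplitz_entry j k l + hcoeff \<alpha> j (k + l + 1)"
    if "j + l \<le> i + 1" for j l
    using that by (simp add: P_entry_def)
  have "\<alpha> * (sym_toeplitz_entry i k 0 + hcoeff \<alpha> i (k + 1))
          + (sym_toeplitz_entry i k 1 + hcoeff \<alpha> i (k + 2))
        = (sym_toeplitz_entry (i + 1) k 0 + hcoeff \<alpha> (i + 1) (k + 1))
          + (sym_toeplitz_entry (i - 1) k 0 + hcoeff \<alpha> (i - 1) (k + 1))"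
  proof -
    consider "k + 3 \<le> i" | "k + 2 = i" | "k + 1 = i" | "k \<ge> i" by linarith
    then show ?thesis
    proof cases
      case 1
      then obtain d where "i = k + 3 + d" by (metis le_iff_add)
      then show ?thesis by (simp add: sym_toeplitz_entry_def hcoeff_def)
    next
      case 2
      then show ?thesis
        by (cases k) (auto simp: sym_toeplitz_entry_def hcoeff_def theta_def power2_eq_square)
    next
      case 3
      then show ?thesis using i
        by (cases k) (auto simp: sym_toeplitz_entry_def hcoeff_def theta_def power2_eq_square)
    qed (use i in \<open>auto simp: sym_toeplitz_entry_def hcoeff_def\<close>)
  qed
  then show ?thesis using i by (simp add: P numeral_2_eq_2)
qed

lemma P_entry_interior:
  assumes i: "1 \<le> i" and l: "1 \<le> l" "l + 1 < m" and k: "k < m"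
  shows "P_entry m \<alpha> \<beta> i k (l - 1) + P_entry m \<alpha> \<beta> i k (l + 1)
       = P_entry m \<alpha> \<beta> (i + 1) k l + P_entry m \<alpha> \<beta> (i - 1) k l"
proof -
  define s t where "s = k + l + 1" and "t = (m - 1 - k) + (m - 1 - l) + 1"
  have st: "k + (l - 1) + 1 = s - 1" "k + (l + 1) + 1 = s + 1"
    "(m - 1 - k) + (m - 1 - (l - 1)) + 1 = t + 1" "(m - 1 - k) + (m - 1 - (l + 1)) + 1 = t - 1"
    "2 \<le> s" "2 \<le> t"
    using l k by (auto simp: s_def t_def)
  have "P_entry m \<alpha> \<beta> i k (l - 1) + P_entry m \<alpha> \<beta> i k (l + 1)
      = (sym_toeplitz_entry i k (l - 1) + sym_toeplitz_entry i k (l + 1))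
        + (hcoeff \<alpha> i (s - 1) + hcoeff \<alpha> i (s + 1)) + (hcoeff \<beta> i (t - 1) + hcoeff \<beta> i (t + 1))"
    unfolding P_entry_def st by (simp add: algebra_simps)
  also have "\<dots> = (sym_toeplitz_entry (i + 1) k l + sym_toeplitz_entry (i - 1) k l)
        + (hcoeff \<alpha> (i + 1) s + hcoeff \<alpha> (i - 1) s) + (hcoeff \<beta> (i + 1) t + hcoeff \<beta> (i - 1) t)"
    by (simp only: sym_toeplitz_entry_three_term[OF i l(1)] hcoeff_three_term[OF i st(5)]
        hcoeff_three_term[OF i st(6)])
  also have "\<dots> = P_entry m \<alpha> \<beta> (i + 1) k l + P_entry m \<alpha> \<beta> (i - 1) k l"
    by (simp add: P_entry_def s_def t_def algebra_simps)
  finally show ?thesis .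
qed

text \<open>Right multiplication by \<open>A\<close> on entry functions, so that ordinary sums stand in for
  sums of matrices.\<close>

definition mult_matA_entry ::
    "nat \<Rightarrow> complex \<Rightarrow> complex \<Rightarrow> (nat \<Rightarrow> nat \<Rightarrow> complex) \<Rightarrow> nat \<Rightarrow> nat \<Rightarrow> complex" where
  "mult_matA_entry m \<alpha> \<beta> X k l =
     (if l = 0 then \<alpha> * X k 0 else 0) + (if l = m - 1 then \<beta> * X k (m - 1) else 0)
     + (if 1 \<le> l then X k (l - 1) else 0) + (if l + 1 < m then X k (l + 1) else 0)"

lemma mult_matA_entry_sum:
  "mult_matA_entry m \<alpha> \<beta> (\<lambda>a b. \<Sum>i\<in>S. X i a b) k l
     = (\<Sum>i\<in>S. mult_matA_entry m \<alpha> \<beta> (X i) k l)"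
  by (simp add: mult_matA_entry_def sum.distrib sum_distrib_left)

lemma mult_matA_entry_scale:
  "mult_matA_entry m \<alpha> \<beta> (\<lambda>a b. c * X a b) k l = c * mult_matA_entry m \<alpha> \<beta> X k l"
  by (simp add: mult_matA_entry_def algebra_simps)

lemma mult_matA_entry_cong:
  "l < m \<Longrightarrow> (\<And>b. b < m \<Longrightarrow> X k b = Y k b)
     \<Longrightarrow> mult_matA_entry m \<alpha> \<beta> X k l = mult_matA_entry m \<alpha> \<beta> Y k l"
  by (simp add: mult_matA_entry_def)

lemma mult_matA_entry_delta:
  assumes "2 \<le> m" "k < m" "l < m"
  shows "mult_matA_entry m \<alpha> \<beta> (\<lambda>a b. of_bool (a = b)) k l = P_entry m \<alpha> \<beta> 1 k l"
  using assms by (auto simp: mult_matA_entry_def P_entry_def sym_toeplitz_entry_def hcoeff_def)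

lemma mult_matA_entry_P_entry:
  assumes i: "1 \<le> i" "i + 2 \<le> m" and k: "k < m" and l: "l < m"
  shows "mult_matA_entry m \<alpha> \<beta> (P_entry m \<alpha> \<beta> i) k l
       = P_entry m \<alpha> \<beta> (i + 1) k l + P_entry m \<alpha> \<beta> (i - 1) k l"
proof -
  consider "l = 0" | "1 \<le> l" "l + 1 < m" | "l = m - 1" using l by linarith
  then show ?thesis
  proof cases
    case 1
    then show ?thesis using P_entry_first_col[OF i k] i by (simp add: mult_matA_entry_def)
  next
    case 2
    then have "l \<noteq> 0" "l \<noteq> m - 1" by auto
    then show ?thesis using P_entry_interior[OF i(1) 2 k] 2 by (simp add: mult_matA_entry_def)
  next
    case 3
    define k' where "k' = m - 1 - k"
    have "k' < m" using k by (simp add: k'_def)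
    have r: "P_entry m \<alpha> \<beta> j k (m - 1 - c) = P_entry m \<beta> \<alpha> j k' c" if "c < m" for j c
      using P_entry_reflect[of k m "m - 1 - c"] k that by (simp add: k'_def)
    have "mult_matA_entry m \<alpha> \<beta> (P_entry m \<alpha> \<beta> i) k l
        = \<beta> * P_entry m \<alpha> \<beta> i k (m - 1 - 0) + P_entry m \<alpha> \<beta> i k (m - 1 - 1)"
      using 3 i by (simp add: mult_matA_entry_def)
    also have "\<dots> = \<beta> * P_entry m \<beta> \<alpha> i k' 0 + P_entry m \<beta> \<alpha> i k' 1"
      using i by (simp only: r)
    also have "\<dots> = P_entry m \<beta> \<alpha> (i + 1) k' 0 + P_entry m \<beta> \<alpha> (i - 1) k' 0"
      by (rule P_entry_first_col[OF i \<open>k' < m\<close>])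
    also have "\<dots> = P_entry m \<alpha> \<beta> (i + 1) k l + P_entry m \<alpha> \<beta> (i - 1) k l"
      using 3 i by (simp add: r[symmetric])
    finally show ?thesis .
  qed
qed

lemma mult_matA_entry_P_entry_int:
  assumes j: "nat \<bar>j\<bar> + 2 \<le> m" and k: "k < m" and l: "l < m"
  shows "mult_matA_entry m \<alpha> \<beta> (P_entry m \<alpha> \<beta> (nat \<bar>j\<bar>)) k l
       = P_entry m \<alpha> \<beta> (nat \<bar>j + 1\<bar>) k l + P_entry m \<alpha> \<beta> (nat \<bar>j - 1\<bar>) k l"
proof (cases "j = 0")
  case True
  have "mult_matA_entry m \<alpha> \<beta> (P_entry m \<alpha> \<beta> 0) k l
      = 2 * mult_matA_entry m \<alpha> \<beta> (\<lambda>a b. of_bool (a = b)) k l"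
    unfolding P_entry_0[abs_def] by (rule mult_matA_entry_scale)
  then show ?thesis using True j mult_matA_entry_delta[of m k l] k l by simp
next
  case False
  then have "{nat \<bar>j + 1\<bar>, nat \<bar>j - 1\<bar>} = {nat \<bar>j\<bar> + 1, nat \<bar>j\<bar> - 1}" by auto
  then have "P_entry m \<alpha> \<beta> (nat \<bar>j + 1\<bar>) k l + P_entry m \<alpha> \<beta> (nat \<bar>j - 1\<bar>) k l
      = P_entry m \<alpha> \<beta> (nat \<bar>j\<bar> + 1) k l + P_entry m \<alpha> \<beta> (nat \<bar>j\<bar> - 1) k l"
    using False by (cases "j > 0") (auto simp: doubleton_eq_iff add.commute)
  with False show ?thesis using mult_matA_entry_P_entry[OF _ j k l] by simp
qed

lemma matA_carrier: "matA m \<alpha> \<beta> \<in> carrier_mat m m"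
  by (simp add: matA_def)

lemma index_mult_matA:
  assumes X: "X \<in> carrier_mat m m" and m: "2 \<le> m" and k: "k < m" and l: "l < m"
  shows "(X * matA m \<alpha> \<beta>) $$ (k, l) = mult_matA_entry m \<alpha> \<beta> (\<lambda>a b. X $$ (a, b)) k l"
proof -
  have A: "matA m \<alpha> \<beta> $$ (j, l) = (if j = 0 then (if l = 0 then \<alpha> else 0) else 0)
      + (if j = m - 1 then (if l = m - 1 then \<beta> else 0) else 0)
      + (if j = l - 1 then (if 1 \<le> l then 1 else 0) else 0) + (if j = l + 1 then 1 else 0)"
    if "j < m" for j
    using that l m by (auto simp: matA_def)
  have "(X * matA m \<alpha> \<beta>) $$ (k, l) = (\<Sum>j<m. X $$ (k, j) * matA m \<alpha> \<beta> $$ (j, l))"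
    using X k l by (auto simp: scalar_prod_def matA_def atLeast0LessThan intro!: sum.cong)
  also have "\<dots> = (\<Sum>j<m. X $$ (k, j) * (if j = 0 then (if l = 0 then \<alpha> else 0) else 0))
      + (\<Sum>j<m. X $$ (k, j) * (if j = m - 1 then (if l = m - 1 then \<beta> else 0) else 0))
      + (\<Sum>j<m. X $$ (k, j) * (if j = l - 1 then (if 1 \<le> l then 1 else 0) else 0))
      + (\<Sum>j<m. X $$ (k, j) * (if j = l + 1 then 1 else 0))"
    by (simp add: A distrib_left sum.distrib)
  also have "\<dots> = mult_matA_entry m \<alpha> \<beta> (\<lambda>a b. X $$ (a, b)) k l"
    using m l unfolding sum_lessThan_mult_delta by (auto simp: mult_matA_entry_def)
  finally show ?thesis .
qed

lemma index_matA_power_double: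
  assumes "n \<le> m - 1" "k < m" "l < m"
  shows "2 * (matA m \<alpha> \<beta> ^\<^sub>m n) $$ (k, l)
       = (\<Sum>i\<le>n. of_nat (n choose i) * P_entry m \<alpha> \<beta> (nat \<bar>int n - 2 * int i\<bar>) k l)"
  using assms
proof (induction n arbitrary: k l)
  case 0
  then show ?case by (simp add: P_entry_0 matA_def)
next
  case (Suc n)
  then have m: "2 \<le> m" by linarith
  have "2 * (matA m \<alpha> \<beta> ^\<^sub>m Suc n) $$ (k, l)
      = mult_matA_entry m \<alpha> \<beta> (\<lambda>a b. 2 * (matA m \<alpha> \<beta> ^\<^sub>m n) $$ (a, b)) k l"
    using Suc.prems m pow_carrier_mat[OF matA_carrier]
    by (simp add: index_mult_matA mult_matA_entry_scale)
  also have "\<dots> = mult_matA_entry m \<alpha> \<beta>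
      (\<lambda>a b. \<Sum>i\<le>n. of_nat (n choose i) * P_entry m \<alpha> \<beta> (nat \<bar>int n - 2 * int i\<bar>) a b) k l"
    using Suc by (intro mult_matA_entry_cong) auto
  also have "\<dots> = (\<Sum>i\<le>n. of_nat (n choose i) * (P_entry m \<alpha> \<beta> (nat \<bar>int n - 2 * int i + 1\<bar>) k l
      + P_entry m \<alpha> \<beta> (nat \<bar>int n - 2 * int i - 1\<bar>) k l))"
    using Suc.prems m
    by (auto simp: mult_matA_entry_sum mult_matA_entry_scale mult_matA_entry_P_entry_int
        intro!: sum.cong)
  also have "\<dots> = (\<Sum>i\<le>Suc n. of_nat (Suc n choose i)
      * P_entry m \<alpha> \<beta> (nat \<bar>int (Suc n) - 2 * int i\<bar>) k l)"
    by (rule sum_binomial_shift[symmetric])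
  finally show ?case .
qed

lemma index_matA_power:
  assumes "n \<le> m - 1" "k < m" "l < m"
  shows "(matA m \<alpha> \<beta> ^\<^sub>m n) $$ (k, l)
       = (\<Sum>i<(n + 1) div 2. of_nat (n choose i) * P_entry m \<alpha> \<beta> (n - 2 * i) k l)
         + phi n * of_bool (k = l)"
proof -
  let ?g = "\<lambda>i. of_nat (n choose i) * P_entry m \<alpha> \<beta> (nat \<bar>int n - 2 * int i\<bar>) k l"
  have sym: "?g (n - i) = ?g i" if "i \<le> n" for i
    using that by (simp add: binomial_symmetric[symmetric] abs_minus_commute)
  have "2 * (matA m \<alpha> \<beta> ^\<^sub>m n) $$ (k, l)
      = 2 * (\<Sum>i<(n + 1) div 2. ?g i) + (if even n then ?g (n div 2) else 0)"
    using index_matA_power_double[OF assms] sum_atMost_symmetric[of n ?g, OF sym] by simp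
  also have "(\<Sum>i<(n + 1) div 2. ?g i)
      = (\<Sum>i<(n + 1) div 2. of_nat (n choose i) * P_entry m \<alpha> \<beta> (n - 2 * i) k l)"
    by (intro sum.cong) (auto simp: nat_diff_distrib nat_mult_distrib)
  also have "(if even n then ?g (n div 2) else 0) = 2 * (phi n * of_bool (k = l))"
    by (auto simp: phi_def P_entry_0)
  finally have "2 * (matA m \<alpha> \<beta> ^\<^sub>m n) $$ (k, l) = 2 * ((\<Sum>i<(n + 1) div 2.
      of_nat (n choose i) * P_entry m \<alpha> \<beta> (n - 2 * i) k l) + phi n * of_bool (k = l))"
    by (simp only: distrib_left)
  then show ?thesis by (simp only: mult_left_cancel[OF numeral_neq_zero])
qed

lemma index_exchJ_mult:
  assumes "H \<in> carrier_mat m n" "k < m" "l < n"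
  shows "(exchJ m * H) $$ (k, l) = H $$ (m - 1 - k, l)"
proof -
  have "(exchJ m * H) $$ (k, l) = (\<Sum>j<m. H $$ (j, l) * (if j = m - 1 - k then 1 else 0))"
    using assms by (auto simp: scalar_prod_def exchJ_def atLeast0LessThan intro!: sum.cong)
  then show ?thesis using assms(2) by (simp add: sum_lessThan_mult_delta)
qed

lemma index_mult_exchJ:
  assumes "H \<in> carrier_mat n m" "k < n" "l < m"
  shows "(H * exchJ m) $$ (k, l) = H $$ (k, m - 1 - l)"
proof -
  have "(H * exchJ m) $$ (k, l) = (\<Sum>j<m. H $$ (k, j) * (if j = m - 1 - l then 1 else 0))"
    using assms by (auto simp: scalar_prod_def exchJ_def atLeast0LessThan intro!: sum.cong)
  then show ?thesis using assms(3) by (simp add: sum_lessThan_mult_delta)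
qed

lemma exchJ_carrier: "exchJ m \<in> carrier_mat m m"
  by (simp add: exchJ_def)

lemma hankelH_carrier: "hankelH m \<gamma> i \<in> carrier_mat m m"
  by (simp add: hankelH_def)

lemma matP_carrier: "matP m \<alpha> \<beta> i \<in> carrier_mat m m"
  unfolding matP_def
  by (auto simp: toepT_def intro!: add_carrier_mat mult_carrier_mat exchJ_carrier hankelH_carrier)

lemma index_matP:
  assumes "1 \<le> i" "k < m" "l < m"
  shows "matP m \<alpha> \<beta> i $$ (k, l) = P_entry m \<alpha> \<beta> i k l"
proof -
  have JH: "exchJ m * hankelH m \<beta> i \<in> carrier_mat m m"
    using exchJ_carrier hankelH_carrier by (rule mult_carrier_mat)
  have JHJ: "exchJ m * hankelH m \<beta> i * exchJ m \<in> carrier_mat m m"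
    using JH exchJ_carrier by (rule mult_carrier_mat)
  have "(exchJ m * hankelH m \<beta> i * exchJ m) $$ (k, l) = hankelH m \<beta> i $$ (m - 1 - k, m - 1 - l)"
    using assms by (simp add: index_mult_exchJ[OF JH] index_exchJ_mult[OF hankelH_carrier])
  then show ?thesis
    using assms carrier_matD[OF JHJ] carrier_matD[OF hankelH_carrier]
    by (simp add: matP_def P_entry_def toepT_def sym_toeplitz_entry_def)
       (simp add: hankelH_def add.commute)
qed

lemma msum_carrier: "(\<And>i. f i \<in> carrier_mat m m) \<Longrightarrow> msum m f xs \<in> carrier_mat m m"
  unfolding msum_def by (induction xs) auto

lemma index_msum:
  assumes "\<And>i. f i \<in> carrier_mat m m" "k < m" "l < m"
  shows "msum m f xs $$ (k, l) = (\<Sum>i\<leftarrow>xs. f i $$ (k, l))"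
proof (induction xs)
  case (Cons a xs)
  have "msum m f xs \<in> carrier_mat m m"
    using assms(1) by (rule msum_carrier)
  with Cons assms show ?case by (simp add: msum_def)
qed (simp add: msum_def assms)

lemma index_binomial_matP_msum:
  assumes "1 \<le> n" "k < m" "l < m"
  shows "(msum m (\<lambda>i. of_nat (n choose i) \<cdot>\<^sub>m matP m \<alpha> \<beta> (n - 2 * i)) [0..<(n - 1) div 2 + 1]
           + phi n \<cdot>\<^sub>m 1\<^sub>m m) $$ (k, l)
       = (\<Sum>i<(n + 1) div 2. of_nat (n choose i) * P_entry m \<alpha> \<beta> (n - 2 * i) k l)
         + phi n * of_bool (k = l)"
    (is "(msum m ?f _ + _) $$ _ = _")
proof -
  have f: "?f i \<in> carrier_mat m m" for i
    using matP_carrier by simp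
  have "?f i $$ (k, l) = of_nat (n choose i) * P_entry m \<alpha> \<beta> (n - 2 * i) k l"
    if "i < (n + 1) div 2" for i
  proof -
    have "1 \<le> n - 2 * i" using that by presburger
    then show ?thesis using assms carrier_matD[OF matP_carrier] by (simp add: index_matP)
  qed
  moreover have "(n - 1) div 2 + 1 = (n + 1) div 2"
    using assms(1) by (cases n) simp_all
  ultimately show ?thesis
    using assms msum_carrier[OF f]
    by (simp add: index_msum[OF f] interv_sum_list_conv_sum_set_nat atLeast0LessThan)
qed

theorem mainTheorem10:
  fixes m n :: nat and \<alpha> \<beta> :: complex
  assumes "m \<ge> 2" and "1 \<le> n" and "n \<le> m - 1"
  shows "matA m \<alpha> \<beta> ^\<^sub>m n =
           msum m (\<lambda>i. of_nat (n choose i) \<cdot>\<^sub>m matP m \<alpha> \<beta> (n - 2 * i)) [0..<(n - 1) div 2 + 1]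
           + phi n \<cdot>\<^sub>m 1\<^sub>m m"
    (is "_ = ?R")
proof (rule eq_matI)
  fix k l
  assume "k < dim_row ?R" and "l < dim_col ?R"
  then have k: "k < m" and l: "l < m" by simp_all
  show "(matA m \<alpha> \<beta> ^\<^sub>m n) $$ (k, l) = ?R $$ (k, l)"
    by (simp only: index_matA_power[OF assms(3) k l] index_binomial_matP_msum[OF assms(2) k l])
qed (simp_all add: matA_def)

end
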